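(* For every $k$-regular graph $G$, $\mu(G)\ge k/2$.
   Context: All graphs are finite and simple. For a graph $G=(V,E)$ on $n$ vertices, a fractional vertex cover is a function $f:V\to[0,\infty)$ with $f(u)+f(v)\ge 1$ for every edge $uv\in E$; $\tau^*(G)$ denotes the minimum of $\sum_{v\in V}f(v)$ over all fractional vertex covers. For $E'\subseteq E$ let $G-E'=(V,E\setminus E')$. Define $\mu(G)=\min\{|E'| : E'\subseteq E,\ \tau^*(G-E')<n/2\}$. *)

theory Defs
  imports Complex_Main
begin

definition simple_graph :: "'a set \<Rightarrow> 'a set set \<Rightarrow> bool" where
  "simple_graph V E \<longleftrightarrow> finite V \<and> (\<forall>e\<in>E. e \<subseteq> V \<and> card e = 2)"

definition degree :: "'a set set \<Rightarrow> 'a \<Rightarrow> nat" where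
  "degree E v = card {e\<in>E. v \<in> e}"

definition regular :: "'a set \<Rightarrow> 'a set set \<Rightarrow> nat \<Rightarrow> bool" where
  "regular V E k \<longleftrightarrow> (\<forall>v\<in>V. degree E v = k)"

definition frac_vertex_cover :: "'a set \<Rightarrow> 'a set set \<Rightarrow> ('a \<Rightarrow> real) \<Rightarrow> bool" where
  "frac_vertex_cover V E f \<longleftrightarrow>
     (\<forall>v\<in>V. 0 \<le> f v) \<and> (\<forall>u v. {u, v} \<in> E \<longrightarrow> f u + f v \<ge> 1)"

text \<open>Fractional vertex cover number (the minimum is attained; we take the infimum).\<close>
definition tau_star :: "'a set \<Rightarrow> 'a set set \<Rightarrow> real" where
  "tau_star V E = Inf {(\<Sum>v\<in>V. f v) | f. frac_vertex_cover V E f}"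

definition mu :: "'a set \<Rightarrow> 'a set set \<Rightarrow> nat" where
  "mu V E = Inf {card E' | E'. E' \<subseteq> E \<and> tau_star V (E - E') < real (card V) / 2}"

end

theory Submission
  imports Defs
begin

(* Delete a set F of fewer than k/2 edges and let f be a fractional vertex cover of G - F.
   For t < 1/2 the vertices with f <= t are independent in G - F, and all their neighbours
   there have f >= 1 - t. Double counting the k edges at each vertex, the deleted edges can
   account for fewer than k of them, so there are at most as many vertices with f <= t as
   with f >= 1 - t. This lets every vertex with f < 1/2 be paired off against one with
   f u + f v >= 1, whence sum f >= |V|/2, i.e. tau*(G - F) >= |V|/2. *)

lemma half_card_le_sum_if_balanced:
  fixes f :: "'a \<Rightarrow> real"
  assumes "finite V"
    and "\<And>t. t < 1/2 \<Longrightarrow> card {v\<in>V. f v \<le> t} \<le> card {v\<in>V. 1 - t \<le> f v}"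
  shows "real (card V) / 2 \<le> sum f V"
  using assms
proof (induction "card V" arbitrary: V rule: less_induct)
  case less
  show ?case
  proof (cases "\<forall>v\<in>V. 1/2 \<le> f v")
    case True
    then have "sum (\<lambda>_. 1/2) V \<le> sum f V"
      by (intro sum_mono) auto
    then show ?thesis
      by simp
  next
    case False
    define u where "u = arg_min_on f V"
    have "V \<noteq> {}"
      using False by blast
    then have u: "u \<in> V" "\<And>w. w \<in> V \<Longrightarrow> f u \<le> f w"
      unfolding u_def using less.prems(1) by (auto intro: arg_min_if_finite(1) arg_min_least)
    have "f u < 1/2"
      using False u(2) by force
    have "0 < card {w\<in>V. f w \<le> f u}"
      using less.prems(1) u(1) by (auto simp: card_gt_0_iff)
    also have "\<dots> \<le> card {w\<in>V. 1 - f u \<le> f w}"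
      using less.prems(2)[OF \<open>f u < 1/2\<close>] .
    finally obtain v where v: "v \<in> V" "1 - f u \<le> f v"
      by (auto simp: card_gt_0_iff)
    have "f u < f v"
      using v(2) \<open>f u < 1/2\<close> by linarith
    define V' where "V' = V - {u, v}"
    have V_eq: "V = insert u (insert v V')" and "u \<notin> insert v V'" and "v \<notin> V'"
      unfolding V'_def using u(1) v(1) \<open>f u < f v\<close> by auto
    have "finite V'"
      unfolding V'_def using less.prems(1) by simp
    then have card_V: "card V = Suc (Suc (card V'))" and sum_V: "sum f V = f u + f v + sum f V'"
      using \<open>u \<notin> insert v V'\<close> \<open>v \<notin> V'\<close> unfolding V_eq by simp_all
    have "card {w\<in>V'. f w \<le> t} \<le> card {w\<in>V'. 1 - t \<le> f w}" if "t < 1/2" for t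
    proof (cases "f u \<le> t")
      case True
      have "{w\<in>V. f w \<le> t} = insert u {w\<in>V'. f w \<le> t}"
        using V_eq True \<open>f u < 1/2\<close> v(2) that by auto
      then have low: "card {w\<in>V. f w \<le> t} = Suc (card {w\<in>V'. f w \<le> t})"
        using \<open>finite V'\<close> \<open>u \<notin> insert v V'\<close> by simp
      have "{w\<in>V. 1 - t \<le> f w} \<subseteq> insert v {w\<in>V'. 1 - t \<le> f w}"
        using V_eq True that by auto
      then have "card {w\<in>V. 1 - t \<le> f w} \<le> card (insert v {w\<in>V'. 1 - t \<le> f w})"
        using \<open>finite V'\<close> by (intro card_mono) auto
      also have "\<dots> \<le> Suc (card {w\<in>V'. 1 - t \<le> f w})"
        using \<open>finite V'\<close> by (simp add: card_insert_if)
      finally show ?thesis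
        using less.prems(2)[OF that] low by linarith
    next
      case False
      then have "{w\<in>V'. f w \<le> t} = {}"
        using u(2) unfolding V'_def by force
      then show ?thesis
        by (simp only: card.empty)
    qed
    then have "real (card V') / 2 \<le> sum f V'"
      using less.hyps[of V'] less.prems(1) card_V unfolding V'_def by simp
    then show ?thesis
      using card_V sum_V v(2) by simp
  qed
qed

lemma finite_edges: "simple_graph V E \<Longrightarrow> finite E"
  unfolding simple_graph_def by (meson Pow_iff finite_Pow_iff rev_finite_subset subsetI)

lemma sum_degree_eq_sum_card_Int:
  assumes "finite E" "finite X"
  shows "(\<Sum>u\<in>X. degree E u) = (\<Sum>e\<in>E. card (X \<inter> e))"
proof -
  have "(\<Sum>u\<in>X. degree E u) = (\<Sum>u\<in>X. \<Sum>e\<in>E. if u \<in> e then 1 else 0)"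
    unfolding degree_def using assms(1) by (simp add: sum.If_cases Int_def)
  also have "\<dots> = (\<Sum>e\<in>E. \<Sum>u\<in>X. if u \<in> e then 1 else 0)"
    by (rule sum.swap)
  also have "\<dots> = (\<Sum>e\<in>E. card (X \<inter> e))"
    using assms(2) by (simp add: sum.If_cases Int_def)
  finally show ?thesis .
qed

lemma sum_degree_le_twice_card:
  assumes "finite E" "finite X" "\<And>e. e \<in> E \<Longrightarrow> card e = 2"
  shows "(\<Sum>u\<in>X. degree E u) \<le> 2 * card E"
proof -
  have "(\<Sum>e\<in>E. card (X \<inter> e)) \<le> (\<Sum>e\<in>E. card e)"
    using assms(3) by (intro sum_mono card_mono) (auto intro: card_ge_0_finite)
  also have "\<dots> = 2 * card E"
    using assms(3) by simp
  finally show ?thesis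
    using sum_degree_eq_sum_card_Int[OF assms(1,2)] by simp
qed

lemma sum_degree_le_sum_degree_if_dominating:
  assumes "finite E" "finite A" "finite B"
    and "\<And>e. e \<in> E \<Longrightarrow> card (A \<inter> e) \<le> 1"
    and "\<And>e. e \<in> E \<Longrightarrow> A \<inter> e \<noteq> {} \<Longrightarrow> B \<inter> e \<noteq> {}"
  shows "(\<Sum>u\<in>A. degree E u) \<le> (\<Sum>v\<in>B. degree E v)"
proof -
  have "card (A \<inter> e) \<le> card (B \<inter> e)" if "e \<in> E" for e
  proof (cases "A \<inter> e = {}")
    case False
    then have "0 < card (B \<inter> e)"
      using assms(3) assms(5)[OF that] by (simp add: card_gt_0_iff)
    then show ?thesis
      using assms(4)[OF that] by linarith
  qed simp
  then show ?thesis
    using assms(1-3) by (simp add: sum_degree_eq_sum_card_Int sum_mono)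
qed

lemma degree_Diff:
  assumes "finite E" "E' \<subseteq> E"
  shows "degree E u = degree E' u + degree (E - E') u"
proof -
  have "{e\<in>E. u \<in> e} = {e\<in>E'. u \<in> e} \<union> {e\<in>E - E'. u \<in> e}"
    using assms(2) by auto
  moreover have "card ({e\<in>E'. u \<in> e} \<union> {e\<in>E - E'. u \<in> e}) =
      card {e\<in>E'. u \<in> e} + card {e\<in>E - E'. u \<in> e}"
    using assms by (intro card_Un_disjoint) (auto intro: finite_subset)
  ultimately show ?thesis
    unfolding degree_def by simp
qed

lemma frac_vertex_cover_edgeE:
  assumes "frac_vertex_cover V E f" "e \<in> E" "card e = 2"
  obtains x y where "e = {x, y}" "1 \<le> f x + f y"
proof -
  obtain x y where "e = {x, y}"
    using assms(3) unfolding card_2_iff by blast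
  then show thesis
    using assms(1,2) that unfolding frac_vertex_cover_def by blast
qed

lemma regular_card_low_le_card_high:
  fixes f :: "'a \<Rightarrow> real"
  assumes "simple_graph V E" "regular V E k" "E' \<subseteq> E"
    and "frac_vertex_cover V (E - E') f" "t < 1/2"
  shows "k * card {u\<in>V. f u \<le> t} \<le> 2 * card E' + k * card {v\<in>V. 1 - t \<le> f v}"
proof -
  define A where "A = {u\<in>V. f u \<le> t}"
  define B where "B = {v\<in>V. 1 - t \<le> f v}"
  have "finite V" "finite E"
    using assms(1) finite_edges unfolding simple_graph_def by auto
  then have fin: "finite A" "finite B" "finite E'" "finite (E - E')"
    unfolding A_def B_def using assms(3) finite_subset by auto
  have edge: "card e = 2 \<and> e \<subseteq> V" if "e \<in> E - E'" for e
    using that assms(1) unfolding simple_graph_def by blast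
  have dominated: "(\<Sum>u\<in>A. degree (E - E') u) \<le> (\<Sum>v\<in>B. degree (E - E') v)"
  proof (rule sum_degree_le_sum_degree_if_dominating[OF fin(4,1,2)])
    fix e assume "e \<in> E - E'"
    then obtain x y where e: "e = {x, y}" "1 \<le> f x + f y"
      using edge assms(4) by (blast elim: frac_vertex_cover_edgeE)
    have "x \<in> V" "y \<in> V"
      using edge \<open>e \<in> E - E'\<close> e(1) by auto
    then have "x \<notin> A \<or> y \<notin> A"
      unfolding A_def using assms(5) e(2) by auto
    then show "card (A \<inter> e) \<le> 1"
      unfolding e(1) by (auto simp: Int_insert_right)
    show "B \<inter> e \<noteq> {}" if "A \<inter> e \<noteq> {}"
      using that e \<open>x \<in> V\<close> \<open>y \<in> V\<close> unfolding A_def B_def by auto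
  qed
  have "(\<Sum>u\<in>A. degree E u) = (\<Sum>u\<in>A. degree E' u) + (\<Sum>u\<in>A. degree (E - E') u)"
    using degree_Diff[OF \<open>finite E\<close> assms(3)] by (simp add: sum.distrib)
  also have "\<dots> \<le> 2 * card E' + (\<Sum>v\<in>B. degree (E - E') v)"
    using sum_degree_le_twice_card[OF fin(3,1)] dominated assms(1,3)
    unfolding simple_graph_def by (intro add_mono) auto
  also have "\<dots> \<le> 2 * card E' + (\<Sum>v\<in>B. degree E v)"
    using degree_Diff[OF \<open>finite E\<close> assms(3)] by (intro add_left_mono sum_mono) simp
  finally have "(\<Sum>u\<in>A. degree E u) \<le> 2 * card E' + (\<Sum>v\<in>B. degree E v)" .
  moreover have "(\<Sum>u\<in>A. degree E u) = k * card A" "(\<Sum>v\<in>B. degree E v) = k * card B"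
    using assms(2) unfolding regular_def A_def B_def by simp_all
  ultimately show ?thesis
    unfolding A_def B_def by simp
qed

lemma half_card_le_sum_frac_vertex_cover:
  fixes f :: "'a \<Rightarrow> real"
  assumes "simple_graph V E" "regular V E k" "E' \<subseteq> E"
    and "frac_vertex_cover V (E - E') f" "2 * card E' < k"
  shows "real (card V) / 2 \<le> sum f V"
proof (rule half_card_le_sum_if_balanced)
  show "finite V"
    using assms(1) unfolding simple_graph_def by blast
  fix t :: real
  assume "t < 1/2"
  then have "k * card {v\<in>V. f v \<le> t} \<le> 2 * card E' + k * card {v\<in>V. 1 - t \<le> f v}"
    using regular_card_low_le_card_high[OF assms(1-4)] by blast
  also have "\<dots> < k * (card {v\<in>V. 1 - t \<le> f v} + 1)"
    using assms(5) by simp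
  finally show "card {v\<in>V. f v \<le> t} \<le> card {v\<in>V. 1 - t \<le> f v}"
    by (simp only: mult_less_cancel1) linarith
qed

lemma half_card_le_tau_star:
  assumes "simple_graph V E" "regular V E k" "E' \<subseteq> E" "2 * card E' < k"
  shows "real (card V) / 2 \<le> tau_star V (E - E')"
  unfolding tau_star_def
proof (rule cInf_greatest)
  have "frac_vertex_cover V (E - E') (\<lambda>_. 1)"
    unfolding frac_vertex_cover_def by simp
  then show "{\<Sum>v\<in>V. f v | f. frac_vertex_cover V (E - E') f} \<noteq> {}"
    by blast
next
  fix x
  assume "x \<in> {\<Sum>v\<in>V. f v | f. frac_vertex_cover V (E - E') f}"
  then obtain f where "x = sum f V" "frac_vertex_cover V (E - E') f"
    by blast
  then show "real (card V) / 2 \<le> x"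
    using half_card_le_sum_frac_vertex_cover[OF assms(1-3) _ assms(4)] by simp
qed

lemma tau_star_no_edges: "tau_star V {} = 0"
  unfolding tau_star_def
proof (rule cInf_eq_minimum)
  show "0 \<in> {\<Sum>v\<in>V. f v | f. frac_vertex_cover V {} f}"
    unfolding frac_vertex_cover_def by (intro CollectI exI[of _ "\<lambda>_. 0"]) simp
qed (auto simp: frac_vertex_cover_def intro: sum_nonneg)

theorem lemma23:
  fixes V :: "'a set" and E :: "'a set set" and k :: nat
  assumes "simple_graph V E" and "V \<noteq> {}" and "regular V E k"
  shows "real (mu V E) \<ge> real k / 2"
proof -
  have "0 < card V"
    using assms(1,2) unfolding simple_graph_def by (simp add: card_gt_0_iff)
  then have "tau_star V (E - E) < real (card V) / 2"
    by (simp add: tau_star_no_edges)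
  then have "mu V E \<in> {card E' | E'. E' \<subseteq> E \<and> tau_star V (E - E') < real (card V) / 2}"
    unfolding mu_def by (intro Inf_nat_def1) blast
  then obtain E' where E': "mu V E = card E'" "E' \<subseteq> E" "tau_star V (E - E') < real (card V) / 2"
    by blast
  then have "\<not> 2 * card E' < k"
    using half_card_le_tau_star[OF assms(1,3) E'(2)] by linarith
  then show ?thesis
    using E'(1) by simp
qed

end
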